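(* Let $a\in\mathbb{B}^2$ and $T_a:\mathbb{B}^2\to\mathbb{B}^2$, $T_a(z)=\frac{z-a}{1-\overline{a}z}$. Then for each $d\in\{t,j^*,w,s,p,b_{\cdot,2}\}$, $$\sup_{x,y\in\mathbb{B}^2,\ x\ne y}\frac{d_{\mathbb{B}^2}(T_a(x),T_a(y))}{d_{\mathbb{B}^2}(x,y)}\ge1+|a|.$$
   Context: $\mathbb{B}^2$ is the unit disk in $\mathbb{C}$; $S^{1}(x,r)$ is the circle of center $x$ and radius $r$. For a domain $G\subsetneq\mathbb{R}^n$ and $x\in G$, $d_G(x)=\inf\{|x-z|:z\in\partial G\}$. Intrinsic (quasi-)metrics: $t_G(x,y)=\frac{|x-y|}{|x-y|+d_G(x)+d_G(y)}$; $j^*_G(x,y)=\frac{|x-y|}{|x-y|+2\min\{d_G(x),d_G(y)\}}$; $s_G(x,y)=\frac{|x-y|}{\inf_{z\in\partial G}(|x-z|+|z-y|)}$; $p_G(x,y)=\frac{|x-y|}{\sqrt{|x-y|^2+4d_G(x)d_G(y)}}$; $b_{G,2}(x,y)=\sup_{z\in\partial G}\frac{|x-y|}{(|x-z|^2+|z-y|^2)^{1/2}}$; for convex $G$, $w_G(x,y)=\frac{|x-y|}{\min\{\inf_{\tilde y\in\tilde Y}|x-\tilde y|,\ \inf_{\tilde x\in\tilde X}|y-\tilde x|\}}$ with $\tilde X=\{\tilde x\in S^{n-1}(x,2d_G(x)):(x+\tilde x)/2\in\partial G\}$, $\tilde Y=\{\tilde y\in S^{n-1}(y,2d_G(y)):(y+\tilde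 y)/2\in\partial G\}$. *)

theory Defs
  imports "HOL-Analysis.Analysis" "HOL-Library.Extended_Real"
begin

definition bdist :: "'a::real_normed_vector set \<Rightarrow> 'a \<Rightarrow> real" where
  "bdist G x = Inf ((\<lambda>z. dist x z) ` frontier G)"

definition t_metric :: "'a::real_normed_vector set \<Rightarrow> 'a \<Rightarrow> 'a \<Rightarrow> real" where
  "t_metric G x y = dist x y / (dist x y + bdist G x + bdist G y)"

definition jstar_metric :: "'a::real_normed_vector set \<Rightarrow> 'a \<Rightarrow> 'a \<Rightarrow> real" where
  "jstar_metric G x y = dist x y / (dist x y + 2 * min (bdist G x) (bdist G y))"

definition s_metric :: "'a::real_normed_vector set \<Rightarrow> 'a \<Rightarrow> 'a \<Rightarrow> real" where
  "s_metric G x y = dist x y / Inf ((\<lambda>z. dist x z + dist z y) ` frontier G)"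

definition p_metric :: "'a::real_normed_vector set \<Rightarrow> 'a \<Rightarrow> 'a \<Rightarrow> real" where
  "p_metric G x y = dist x y / sqrt ((dist x y)\<^sup>2 + 4 * bdist G x * bdist G y)"

definition b2_metric :: "'a::real_normed_vector set \<Rightarrow> 'a \<Rightarrow> 'a \<Rightarrow> real" where
  "b2_metric G x y = Sup ((\<lambda>z. dist x y / sqrt ((dist x z)\<^sup>2 + (dist z y)\<^sup>2)) ` frontier G)"

definition w_tilde :: "'a::real_normed_vector set \<Rightarrow> 'a \<Rightarrow> 'a set" where
  "w_tilde G x = {x'. x' \<in> sphere x (2 * bdist G x) \<and> (1/2) *\<^sub>R (x + x') \<in> frontier G}"

definition w_metric :: "'a::real_normed_vector set \<Rightarrow> 'a \<Rightarrow> 'a \<Rightarrow> real" where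
  "w_metric G x y = dist x y /
     min (Inf ((\<lambda>y'. dist x y') ` w_tilde G y)) (Inf ((\<lambda>x'. dist y x') ` w_tilde G x))"

definition moebT :: "complex \<Rightarrow> complex \<Rightarrow> complex" where
  "moebT a z = (z - a) / (1 - cnj a * z)"

end

theory Submission
  imports Defs
begin

text \<open>
  Write \<open>a = -r v\<close> with \<open>r = |a|\<close> and \<open>|v| = 1\<close>. On the radius
  \<open>{\<alpha> v | 0 \<le> \<alpha> < 1}\<close> the boundary distance is \<open>1 - \<alpha>\<close>, and each of the six
  metrics takes the form \<open>|\<alpha> - \<beta>| / N(|\<alpha> - \<beta>|, 1 - \<alpha>, 1 - \<beta>)\<close> with \<open>N\<close>
  positively homogeneous of degree one. \<open>T\<^sub>a\<close> maps the segment \<open>[0, s v]\<close> onto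
  \<open>[r v, b v]\<close> with \<open>b = (s + r)/(1 + r s)\<close>, and the triple \<open>(b - r, 1 - r, 1 - b)\<close>
  is a positive multiple of \<open>(s (1 + r), 1 + r s, 1 - s)\<close>. Hence the distortion ratio of
  the pair \<open>0, s v\<close> is \<open>(1 + r) N(s, 1, 1 - s) / N(s (1 + r), 1 + r s, 1 - s)\<close>, which
  tends to \<open>1 + r\<close> as \<open>s \<rightarrow> 0\<close>.
\<close>

lemma dist_of_real_mult_unit:
  assumes "norm (v::complex) = 1"
  shows "dist (of_real \<alpha> * v) (of_real \<beta> * v) = \<bar>\<alpha> - \<beta>\<bar>"
proof -
  have "of_real \<alpha> * v - of_real \<beta> * v = of_real (\<alpha> - \<beta>) * v"
    by (simp add: algebra_simps)
  then have "dist (of_real \<alpha> * v) (of_real \<beta> * v) = norm (of_real (\<alpha> - \<beta>) * v)"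
    by (simp only: dist_norm)
  then show ?thesis
    using assms by (simp only: norm_mult norm_of_real) simp
qed

lemma dist_sphere_ge: "norm w = 1 \<Longrightarrow> 1 - norm p \<le> dist p w"
  using norm_triangle_ineq2[of w p] by (simp add: dist_norm norm_minus_commute)

lemma bdist_unit_ball:
  assumes "norm (z::complex) < 1"
  shows "bdist (ball 0 1) z = 1 - norm z"
  unfolding bdist_def frontier_ball[OF zero_less_one]
proof (rule cInf_eq_minimum)
  define w where "w = (if z = 0 then 1 else sgn z)"
  have "norm w = 1"
    by (simp add: w_def norm_sgn)
  moreover have "dist z w = 1 - norm z"
  proof (cases "z = 0")
    case False
    then have "z - w = (norm z - 1) *\<^sub>R sgn z"
      by (simp add: w_def sgn_div_norm algebra_simps)
    then show ?thesis
      using assms False by (simp add: dist_norm norm_sgn)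
  qed (simp add: w_def)
  ultimately show "1 - norm z \<in> dist z ` sphere 0 1"
    by (metis dist_0_norm image_eqI mem_sphere)
qed (auto simp: dist_sphere_ge)

lemma s_metric_inf_on_radius:
  assumes "0 \<le> \<alpha>" "\<alpha> < 1" "0 \<le> \<beta>" "\<beta> < 1" "norm (v::complex) = 1"
  shows "Inf ((\<lambda>z. dist (of_real \<alpha> * v) z + dist z (of_real \<beta> * v)) ` frontier (ball 0 1))
           = 2 - \<alpha> - \<beta>"
  unfolding frontier_ball[OF zero_less_one]
proof (rule cInf_eq_minimum)
  show "2 - \<alpha> - \<beta> \<in> (\<lambda>z. dist (of_real \<alpha> * v) z + dist z (of_real \<beta> * v)) ` sphere 0 1"
    using assms dist_of_real_mult_unit[OF assms(5), of \<alpha> 1]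
      dist_of_real_mult_unit[OF assms(5), of 1 \<beta>]
    by (intro image_eqI[of _ _ v]) auto
next
  fix x
  assume "x \<in> (\<lambda>z. dist (of_real \<alpha> * v) z + dist z (of_real \<beta> * v)) ` sphere 0 1"
  then obtain w where "norm w = 1" "x = dist (of_real \<alpha> * v) w + dist w (of_real \<beta> * v)"
    by auto
  then show "2 - \<alpha> - \<beta> \<le> x"
    using dist_sphere_ge[of w "of_real \<alpha> * v"] dist_sphere_ge[of w "of_real \<beta> * v"] assms
    by (simp add: dist_commute norm_mult)
qed

lemma dist_w_tilde_ge:
  assumes "y' \<in> w_tilde (ball (0::complex) 1) q"
  shows "2 - norm q - norm p \<le> dist p y'"
proof -
  have "norm (q + y') = 2"
    using assms unfolding w_tilde_def by auto
  then show ?thesis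
    using norm_triangle_ineq[of q y'] norm_triangle_ineq2[of y' p]
    by (simp add: dist_norm norm_minus_commute)
qed

lemma w_metric_inf_on_radius:
  assumes "0 \<le> \<alpha>" "\<alpha> < 1" "0 \<le> \<beta>" "\<beta> < 1" "norm (v::complex) = 1"
  shows "Inf ((\<lambda>y'. dist (of_real \<alpha> * v) y') ` w_tilde (ball 0 1) (of_real \<beta> * v))
           = 2 - \<alpha> - \<beta>"
proof (rule cInf_eq_minimum)
  define y' where "y' = of_real (2 - \<beta>) * v"
  have "of_real \<beta> * v + y' = 2 * v"
    by (simp add: y'_def algebra_simps)
  then have "(1/2) *\<^sub>R (of_real \<beta> * v + y') = v" "norm (of_real \<beta> * v + y') = 2"
    using assms(5) by (simp_all add: scaleR_conv_of_real norm_mult)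
  moreover have "dist (of_real \<beta> * v) y' = 2 * (1 - \<beta>)"
    using dist_of_real_mult_unit[OF assms(5), of \<beta> "2 - \<beta>"] assms by (simp add: y'_def)
  moreover have "bdist (ball 0 1) (of_real \<beta> * v) = 1 - \<beta>"
    using bdist_unit_ball[of "of_real \<beta> * v"] assms by (simp add: norm_mult)
  ultimately have "y' \<in> w_tilde (ball 0 1) (of_real \<beta> * v)"
    unfolding w_tilde_def using assms(5) by simp
  moreover have "dist (of_real \<alpha> * v) y' = 2 - \<alpha> - \<beta>"
    using dist_of_real_mult_unit[OF assms(5), of \<alpha> "2 - \<beta>"] assms by (simp add: y'_def)
  ultimately show "2 - \<alpha> - \<beta> \<in> dist (of_real \<alpha> * v) ` w_tilde (ball 0 1) (of_real \<beta> * v)"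
    by (metis image_eqI)
next
  fix x
  assume "x \<in> dist (of_real \<alpha> * v) ` w_tilde (ball 0 1) (of_real \<beta> * v)"
  then obtain y' where "y' \<in> w_tilde (ball 0 1) (of_real \<beta> * v)" "x = dist (of_real \<alpha> * v) y'"
    by auto
  then show "2 - \<alpha> - \<beta> \<le> x"
    using dist_w_tilde_ge[of y' "of_real \<beta> * v" "of_real \<alpha> * v"] assms by (simp add: norm_mult)
qed

lemma b2_metric_on_radius:
  assumes "0 \<le> \<alpha>" "\<alpha> < 1" "0 \<le> \<beta>" "\<beta> < 1" "norm (v::complex) = 1"
  shows "b2_metric (ball 0 1) (of_real \<alpha> * v) (of_real \<beta> * v)
           = \<bar>\<alpha> - \<beta>\<bar> / sqrt ((1 - \<alpha>)\<^sup>2 + (1 - \<beta>)\<^sup>2)"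
  unfolding b2_metric_def frontier_ball[OF zero_less_one] dist_of_real_mult_unit[OF assms(5)]
proof (rule cSup_eq_maximum)
  show "\<bar>\<alpha> - \<beta>\<bar> / sqrt ((1 - \<alpha>)\<^sup>2 + (1 - \<beta>)\<^sup>2)
      \<in> (\<lambda>z. \<bar>\<alpha> - \<beta>\<bar> / sqrt ((dist (of_real \<alpha> * v) z)\<^sup>2 + (dist z (of_real \<beta> * v))\<^sup>2)) ` sphere 0 1"
    using assms dist_of_real_mult_unit[OF assms(5), of \<alpha> 1]
      dist_of_real_mult_unit[OF assms(5), of 1 \<beta>]
    by (intro image_eqI[of _ _ v]) auto
next
  fix x
  assume "x \<in> (\<lambda>z. \<bar>\<alpha> - \<beta>\<bar> / sqrt ((dist (of_real \<alpha> * v) z)\<^sup>2 + (dist z (of_real \<beta> * v))\<^sup>2)) ` sphere 0 1"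
  then obtain w where "norm w = 1"
    and x: "x = \<bar>\<alpha> - \<beta>\<bar> / sqrt ((dist (of_real \<alpha> * v) w)\<^sup>2 + (dist w (of_real \<beta> * v))\<^sup>2)"
    by auto
  then have "1 - \<alpha> \<le> dist (of_real \<alpha> * v) w" "1 - \<beta> \<le> dist w (of_real \<beta> * v)"
    using dist_sphere_ge[of w "of_real \<alpha> * v"] dist_sphere_ge[of w "of_real \<beta> * v"] assms
    by (simp_all add: dist_commute norm_mult)
  then have "(1 - \<alpha>)\<^sup>2 + (1 - \<beta>)\<^sup>2 \<le> (dist (of_real \<alpha> * v) w)\<^sup>2 + (dist w (of_real \<beta> * v))\<^sup>2"
    using assms by (intro add_mono power_mono) auto
  moreover have "0 < (1 - \<alpha>)\<^sup>2 + (1 - \<beta>)\<^sup>2"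
    using assms by (simp add: add_pos_nonneg)
  ultimately show "x \<le> \<bar>\<alpha> - \<beta>\<bar> / sqrt ((1 - \<alpha>)\<^sup>2 + (1 - \<beta>)\<^sup>2)"
    unfolding x by (intro divide_left_mono) auto
qed

lemma metrics_on_radius:
  assumes "0 \<le> \<alpha>" "\<alpha> < 1" "0 \<le> \<beta>" "\<beta> < 1" "norm (v::complex) = 1"
  defines "x \<equiv> of_real \<alpha> * v" and "y \<equiv> of_real \<beta> * v"
  shows "t_metric (ball 0 1) x y = \<bar>\<alpha> - \<beta>\<bar> / (\<bar>\<alpha> - \<beta>\<bar> + (1 - \<alpha>) + (1 - \<beta>))"
    and "jstar_metric (ball 0 1) x y = \<bar>\<alpha> - \<beta>\<bar> / (\<bar>\<alpha> - \<beta>\<bar> + 2 * min (1 - \<alpha>) (1 - \<beta>))"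
    and "s_metric (ball 0 1) x y = \<bar>\<alpha> - \<beta>\<bar> / ((1 - \<alpha>) + (1 - \<beta>))"
    and "w_metric (ball 0 1) x y = \<bar>\<alpha> - \<beta>\<bar> / ((1 - \<alpha>) + (1 - \<beta>))"
    and "p_metric (ball 0 1) x y = \<bar>\<alpha> - \<beta>\<bar> / sqrt (\<bar>\<alpha> - \<beta>\<bar>\<^sup>2 + 4 * (1 - \<alpha>) * (1 - \<beta>))"
    and "b2_metric (ball 0 1) x y = \<bar>\<alpha> - \<beta>\<bar> / sqrt ((1 - \<alpha>)\<^sup>2 + (1 - \<beta>)\<^sup>2)"
proof -
  have bd: "bdist (ball 0 1) x = 1 - \<alpha>" "bdist (ball 0 1) y = 1 - \<beta>"
    using assms bdist_unit_ball by (simp_all add: norm_mult)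
  note distance = dist_of_real_mult_unit[OF assms(5), of \<alpha> \<beta>, folded x_def y_def]
  show "t_metric (ball 0 1) x y = \<bar>\<alpha> - \<beta>\<bar> / (\<bar>\<alpha> - \<beta>\<bar> + (1 - \<alpha>) + (1 - \<beta>))"
    and "jstar_metric (ball 0 1) x y = \<bar>\<alpha> - \<beta>\<bar> / (\<bar>\<alpha> - \<beta>\<bar> + 2 * min (1 - \<alpha>) (1 - \<beta>))"
    and "p_metric (ball 0 1) x y = \<bar>\<alpha> - \<beta>\<bar> / sqrt (\<bar>\<alpha> - \<beta>\<bar>\<^sup>2 + 4 * (1 - \<alpha>) * (1 - \<beta>))"
    by (simp_all only: t_metric_def jstar_metric_def p_metric_def bd distance)
  show "s_metric (ball 0 1) x y = \<bar>\<alpha> - \<beta>\<bar> / ((1 - \<alpha>) + (1 - \<beta>))"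
    unfolding s_metric_def x_def y_def dist_of_real_mult_unit[OF assms(5)]
      s_metric_inf_on_radius[OF assms(1-5)] by simp
  show "w_metric (ball 0 1) x y = \<bar>\<alpha> - \<beta>\<bar> / ((1 - \<alpha>) + (1 - \<beta>))"
    unfolding w_metric_def x_def y_def dist_of_real_mult_unit[OF assms(5)]
      w_metric_inf_on_radius[OF assms(1-5)] w_metric_inf_on_radius[OF assms(3,4,1,2,5)] by simp
  show "b2_metric (ball 0 1) x y = \<bar>\<alpha> - \<beta>\<bar> / sqrt ((1 - \<alpha>)\<^sup>2 + (1 - \<beta>)\<^sup>2)"
    unfolding x_def y_def by (rule b2_metric_on_radius[OF assms(1-5)])
qed

lemma moebT_on_radius:
  assumes "a = - of_real r * v" "norm v = 1" "1 + r * t \<noteq> 0"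
  shows "moebT a (of_real t * v) = of_real ((t + r) / (1 + r * t)) * v"
proof -
  have "cnj v * v = 1"
    using complex_norm_square[of v] assms(2) by (simp add: mult.commute)
  then have "1 - cnj a * (of_real t * v) = of_real (1 + r * t)"
    by (simp add: assms(1) algebra_simps)
  then show ?thesis
    unfolding moebT_def using assms(3) by (simp add: assms(1) field_simps)
qed

lemma moebius_segment_rescaling:
  fixes r s :: real
  assumes "0 \<le> r" "r < 1" "0 < s" "s < 1"
  defines "b \<equiv> (s + r) / (1 + r * s)" and "k \<equiv> (1 - r) / (1 + r * s)"
  shows "0 < k" "0 \<le> b" "b < 1"
    and "\<bar>r - b\<bar> = k * (s * (1 + r))" "1 - r = k * (1 + r * s)" "1 - b = k * (1 - s)"
proof -
  have pos: "0 < 1 + r * s"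
    using assms by (simp add: add_pos_nonneg)
  show "0 < k" "0 \<le> b"
    using assms pos by (simp_all add: k_def b_def)
  show "1 - r = k * (1 + r * s)"
    using pos by (simp add: k_def)
  show right: "1 - b = k * (1 - s)"
    using pos by (simp add: b_def k_def field_simps)
  have "b - r = k * (s * (1 + r))"
    using pos by (simp add: b_def k_def field_simps)
  moreover have "0 \<le> k * (s * (1 + r))"
    using \<open>0 < k\<close> assms by simp
  moreover have "0 < k * (1 - s)"
    by (rule mult_pos_pos[OF \<open>0 < k\<close>]) (use assms in simp)
  ultimately show "\<bar>r - b\<bar> = k * (s * (1 + r))" "b < 1"
    using right by linarith+
qed

lemma ereal_le_Sup_if_tendsto:
  assumes "F \<noteq> bot" "(g \<longlongrightarrow> L) F" "eventually (\<lambda>s. ereal (g s) \<in> S) F"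
  shows "ereal L \<le> Sup S"
proof (rule tendsto_le[OF assms(1) tendsto_const])
  show "((\<lambda>s. ereal (g s)) \<longlongrightarrow> ereal L) F"
    using assms(2) by (simp add: lim_ereal)
  show "\<forall>\<^sub>F s in F. ereal (g s) \<le> Sup S"
    using assms(3) by (rule eventually_mono) (rule Sup_upper)
qed

lemma mult_sqrt_eq_sqrt_square_mult: "0 \<le> k \<Longrightarrow> k * sqrt q = sqrt (k\<^sup>2 * q)"
  by (simp add: real_sqrt_mult)

lemma moebT_distortion_Sup_ge:
  fixes d :: "complex set \<Rightarrow> complex \<Rightarrow> complex \<Rightarrow> real"
    and N :: "real \<Rightarrow> real \<Rightarrow> real \<Rightarrow> real"
  assumes a: "a \<in> ball 0 1"
    and on_radius: "\<And>\<alpha> \<beta> v. 0 \<le> \<alpha> \<Longrightarrow> \<alpha> < 1 \<Longrightarrow> 0 \<le> \<beta> \<Longrightarrow> \<beta> < 1 \<Longrightarrow>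
       norm v = 1 \<Longrightarrow> d (ball 0 1) (of_real \<alpha> * v) (of_real \<beta> * v)
         = \<bar>\<alpha> - \<beta>\<bar> / N \<bar>\<alpha> - \<beta>\<bar> (1 - \<alpha>) (1 - \<beta>)"
    and homogeneous: "\<And>k x y z. 0 < k \<Longrightarrow> N (k * x) (k * y) (k * z) = k * N x y z"
    and limit: "\<And>c r. ((\<lambda>s. N (s * c) (1 + r * s) (1 - s)) \<longlongrightarrow> N 0 1 1) (at 0)"
    and nonzero: "N 0 1 1 \<noteq> 0"
  shows "ereal (1 + norm a) \<le>
           Sup {ereal (d (ball 0 1) (moebT a x) (moebT a y) / d (ball 0 1) x y) | x y.
                  x \<in> ball 0 1 \<and> y \<in> ball 0 1 \<and> x \<noteq> y}" (is "_ \<le> Sup ?S")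
proof -
  define r where "r = norm a"
  define v where "v = (if a = 0 then 1 else - a / of_real (norm a))"
  have r: "0 \<le> r" "r < 1"
    using a by (auto simp: r_def)
  have v: "norm v = 1" "a = - of_real r * v"
    by (simp_all add: v_def r_def norm_divide)
  define g where "g s = (1 + r) * N s 1 (1 - s) / N (s * (1 + r)) (1 + r * s) (1 - s)" for s
  have "ereal (g s) \<in> ?S" if s: "0 < s" "s < 1" for s
  proof -
    define b where "b = (s + r) / (1 + r * s)"
    define k where "k = (1 - r) / (1 + r * s)"
    note segment = moebius_segment_rescaling[OF r s, folded b_def k_def]
    have "1 + r * s \<noteq> 0"
      using r s by (smt (verit) mult_nonneg_nonneg)
    then have image:
      "moebT a (of_real 0 * v) = of_real r * v" "moebT a (of_real s * v) = of_real b * v"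
      using moebT_on_radius[OF v(2,1), of 0] moebT_on_radius[OF v(2,1), of s]
      by (simp_all only: b_def) simp_all
    have "d (ball 0 1) (of_real r * v) (of_real b * v)
        = k * (s * (1 + r)) / (k * N (s * (1 + r)) (1 + r * s) (1 - s))"
      using on_radius[OF r segment(2,3) v(1)] segment(4-6) homogeneous[OF segment(1)] by simp
    also have "\<dots> = s * (1 + r) / N (s * (1 + r)) (1 + r * s) (1 - s)"
      using segment(1) by simp
    finally have image_distance: "d (ball 0 1) (of_real r * v) (of_real b * v)
        = s * (1 + r) / N (s * (1 + r)) (1 + r * s) (1 - s)" .
    have distance: "d (ball 0 1) (of_real 0 * v) (of_real s * v) = s / N s 1 (1 - s)"
      using on_radius[of 0 s v] s v by simp
    have "g s = d (ball 0 1) (moebT a (of_real 0 * v)) (moebT a (of_real s * v))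
                / d (ball 0 1) (of_real 0 * v) (of_real s * v)"
      unfolding image image_distance distance using s
      by (cases "N s 1 (1 - s) = 0"; cases "N (s * (1 + r)) (1 + r * s) (1 - s) = 0")
        (simp_all add: g_def field_simps)
    moreover have
      "of_real 0 * v \<in> ball 0 1" "of_real s * v \<in> ball 0 1" "of_real 0 * v \<noteq> of_real s * v"
      using v s by (auto simp: norm_mult)
    ultimately show ?thesis
      by blast
  qed
  then have "\<forall>\<^sub>F s in at_right 0. ereal (g s) \<in> ?S"
    by (intro eventually_at_rightI[of 0 1]) auto
  moreover have "(g \<longlongrightarrow> 1 + r) (at_right 0)"
  proof -
    have "((\<lambda>s. N s 1 (1 - s)) \<longlongrightarrow> N 0 1 1) (at 0)"
      using limit[of 1 0] by simp
    moreover have "((\<lambda>s. N (s * (1 + r)) (1 + r * s) (1 - s)) \<longlongrightarrow> N 0 1 1) (at 0)"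
      using limit[of "1 + r" r] .
    ultimately have "(g \<longlongrightarrow> (1 + r) * N 0 1 1 / N 0 1 1) (at 0)"
      unfolding g_def by (intro tendsto_intros nonzero)
    then show ?thesis
      using nonzero by (simp add: tendsto_mono[OF at_le[OF subset_UNIV]])
  qed
  ultimately show ?thesis
    unfolding r_def by (rule ereal_le_Sup_if_tendsto[OF trivial_limit_at_right_real, rotated])
qed

theorem lemma4p9:
  fixes a :: complex
  assumes "a \<in> ball 0 1"
  shows "\<forall>d \<in> {t_metric, jstar_metric, w_metric, s_metric, p_metric, b2_metric}.
           ereal (1 + norm a) \<le>
           Sup {ereal (d (ball 0 1) (moebT a x) (moebT a y) / d (ball 0 1) x y) | x y.
                  x \<in> ball 0 1 \<and> y \<in> ball 0 1 \<and> x \<noteq> y}"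
proof -
  define bounded_below where "bounded_below d \<longleftrightarrow> ereal (1 + norm a) \<le>
    Sup {ereal (d (ball 0 1) (moebT a x) (moebT a y) / d (ball 0 1) x y) | x y.
           x \<in> ball 0 1 \<and> y \<in> ball 0 1 \<and> x \<noteq> y}"
    for d :: "complex set \<Rightarrow> complex \<Rightarrow> complex \<Rightarrow> real"
  note distortion = moebT_distortion_Sup_ge[OF assms, folded bounded_below_def]
  note homogeneity = mult_sqrt_eq_sqrt_square_mult min_mult_distrib_left power2_eq_square
  have "bounded_below t_metric"
    by (rule distortion[where d = t_metric and N = "\<lambda>x y z. x + y + z",
          OF metrics_on_radius(1)])
      (auto simp: algebra_simps intro!: tendsto_eq_intros)
  moreover have "bounded_below jstar_metric"
    by (rule distortion[where d = jstar_metric and N = "\<lambda>x y z. x + 2 * min y z",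
          OF metrics_on_radius(2)])
      (auto simp: homogeneity algebra_simps intro!: tendsto_eq_intros)
  moreover have "bounded_below s_metric"
    by (rule distortion[where d = s_metric and N = "\<lambda>x y z. y + z",
          OF metrics_on_radius(3)])
      (auto simp: algebra_simps intro!: tendsto_eq_intros)
  moreover have "bounded_below w_metric"
    by (rule distortion[where d = w_metric and N = "\<lambda>x y z. y + z",
          OF metrics_on_radius(4)])
      (auto simp: algebra_simps intro!: tendsto_eq_intros)
  moreover have "bounded_below p_metric"
    by (rule distortion[where d = p_metric and N = "\<lambda>x y z. sqrt (x\<^sup>2 + 4 * y * z)",
          OF metrics_on_radius(5)])
      (auto simp: homogeneity algebra_simps intro!: tendsto_eq_intros)
  moreover have "bounded_below b2_metric"
    by (rule distortion[where d = b2_metric and N = "\<lambda>x y z. sqrt (y\<^sup>2 + z\<^sup>2)",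
          OF metrics_on_radius(6)])
      (auto simp: homogeneity algebra_simps intro!: tendsto_eq_intros)
  ultimately show ?thesis
    unfolding bounded_below_def by blast
qed

end
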